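(* For every $\alpha$ with $5\pi/6<\alpha<2\pi$ there exist $R>0$ and a finite set $V$ of pairwise distinct points in the plane such that, when the radius levels $r_1<\dots<r_k=R$ include every pairwise distance $d(u,v)\le R$ between nodes of $V$, the graph $G_R$ is connected but $G_\alpha$ is not connected. In particular, for $\alpha>5\pi/6$, $G_\alpha$ does not in general preserve the connectivity of $G_R$.
   Context: Let $V$ be a finite set of pairwise distinct points (nodes) in the Euclidean plane, $d$ the Euclidean distance, and $R>0$. Let $G_R=(V,E)$ be the undirected graph with $E=\{\{u,v\}: u\neq v,\ d(u,v)\le R\}$. Fix a finite increasing sequence of radius levels $0<r_1<r_2<\dots<r_k=R$. For $u\in V$ and $1\le i\le k$ let $S_i(u)=\{v\in V\setminus\{u\}: d(u,v)\le r_i\}$. For $0<\alpha<2\pi$, a closed cone of width $\alpha$ with apex $u$ is a set $\{u+t(\cos\varphi,\sin\varphi): t\ge 0,\ \varphi\in[\theta-\alpha/2,\theta+\alpha/2]\}$ for some $\theta$. A finite set $S\subseteq V\setminus\{u\}$ has an $\alpha$-gap (at $u$) if some closed cone of width $\alpha$ with apex $u$ contains no node of $S$ (in particular $\emptyset$ has an $\alpha$-gap). The algorithm CBTC($\alpha$) assigns to each $u$ the index $i_u$ = the least $i\in\{1,\dots,k\}$ such that $S_i(u)$ has no $\alpha$-gap, or $i_u=k$ if there is no such $i$; set $N_\alpha(u)=S_{i_u}(u)$ and $N_\alpha=\{(u,v): v\in N_\alpha(u)\}$. Let $E_\alpha=\{\{u,v\}: (u,v)\in N_\alpha \text{ or }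 (v,u)\in N_\alpha\}$ (the symmetric closure of $N_\alpha$) and $G_\alpha=(V,E_\alpha)$. *)

theory Defs
  imports "HOL-Analysis.Analysis"
begin

text \<open>The Euclidean plane is modelled by the complex numbers; dist is Euclidean distance.
  Radius levels r_1 < ... < r_k are a list rs (0-based indices 0..k-1).\<close>

definition levels_ok :: "real list \<Rightarrow> real \<Rightarrow> bool" where
  "levels_ok rs R \<longleftrightarrow> rs \<noteq> [] \<and> sorted_wrt (<) rs \<and> 0 < hd rs \<and> last rs = R"

definition Sset :: "complex set \<Rightarrow> real list \<Rightarrow> nat \<Rightarrow> complex \<Rightarrow> complex set" where
  "Sset V rs i u = {v \<in> V. v \<noteq> u \<and> dist u v \<le> rs ! i}"

definition cone :: "complex \<Rightarrow> real \<Rightarrow> real \<Rightarrow> complex set" where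
  "cone u \<alpha> \<theta> = {u + complex_of_real t * cis \<phi> | t \<phi>.
      0 \<le> t \<and> \<theta> - \<alpha>/2 \<le> \<phi> \<and> \<phi> \<le> \<theta> + \<alpha>/2}"

definition has_gap :: "complex \<Rightarrow> real \<Rightarrow> complex set \<Rightarrow> bool" where
  "has_gap u \<alpha> S \<longleftrightarrow> (\<exists>\<theta>. cone u \<alpha> \<theta> \<inter> S = {})"

definition cbtc_index :: "complex set \<Rightarrow> real list \<Rightarrow> real \<Rightarrow> complex \<Rightarrow> nat" where
  "cbtc_index V rs \<alpha> u =
     (if \<exists>i < length rs. \<not> has_gap u \<alpha> (Sset V rs i u)
      then (LEAST i. i < length rs \<and> \<not> has_gap u \<alpha> (Sset V rs i u))
      else length rs - 1)"

definition N_alpha :: "complex set \<Rightarrow> real list \<Rightarrow> real \<Rightarrow> complex \<Rightarrow> complex set" where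
  "N_alpha V rs \<alpha> u = Sset V rs (cbtc_index V rs \<alpha> u) u"

definition E_R :: "complex set \<Rightarrow> real \<Rightarrow> (complex \<times> complex) set" where
  "E_R V R = {(u, v). u \<in> V \<and> v \<in> V \<and> u \<noteq> v \<and> dist u v \<le> R}"

definition E_alpha :: "complex set \<Rightarrow> real list \<Rightarrow> real \<Rightarrow> (complex \<times> complex) set" where
  "E_alpha V rs \<alpha> = {(u, v). u \<in> V \<and> v \<in> V \<and>
      (v \<in> N_alpha V rs \<alpha> u \<or> u \<in> N_alpha V rs \<alpha> v)}"

definition graph_connected :: "'a set \<Rightarrow> ('a \<times> 'a) set \<Rightarrow> bool" where
  "graph_connected V E \<longleftrightarrow> (\<forall>u\<in>V. \<forall>v\<in>V. (u, v) \<in> E\<^sup>*)"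

end

theory Submission
  imports Defs
begin

text \<open>
  The counterexample is symmetric under the point reflection \<open>z \<mapsto> 1 - z\<close>, which maps
  the node 0 to the node 1. Around 0 we place three nodes closer than 1 in the directions
  \<open>a = \<pi>/3 + e\<close>, \<open>\<pi>\<close> and \<open>-\<pi>/2 - e\<close>, whose consecutive angular gaps are at most
  \<open>5\<pi>/6 + 2e \<le> \<alpha>\<close>. Hence CBTC(\<open>\<alpha>\<close>) stops at 0 at a radius below 1 and does not link 0
  to 1; since CBTC commutes with rigid motions, 1 does not link to 0 either. Every other pair
  of nodes from the two halves is more than 1 apart, so \<open>G\<^sub>\<alpha>\<close> splits into the halves, while
  \<open>G\<^sub>R\<close> with \<open>R = 1\<close> is connected through the edge \<open>{0, 1}\<close>. The node in direction \<open>a\<close>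
  lies within 1 of 0 but farther than 1 from 1 only if \<open>a > \<pi>/3\<close>; this is where the
  bound \<open>5\<pi>/6\<close> comes from.
\<close>

lemma cis_add_2pi_multiple: "cis (x + 2 * pi * of_int k) = cis x"
  by (simp flip: cis_mult)

lemma not_has_gap_if_every_window_hit:
  assumes "\<And>m. p - 2 * pi \<le> m \<Longrightarrow> m < p \<Longrightarrow>
             \<exists>c \<phi>. 0 \<le> c \<and> u + of_real c * cis \<phi> \<in> S \<and> m \<le> \<phi> \<and> \<phi> \<le> m + \<alpha>"
  shows "\<not> has_gap u \<alpha> S"
  unfolding has_gap_def
proof
  assume "\<exists>\<theta>. cone u \<alpha> \<theta> \<inter> S = {}"
  then obtain \<theta> where empty: "cone u \<alpha> \<theta> \<inter> S = {}" ..
  define m where "m = \<theta> - \<alpha> / 2"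
  define k :: int where "k = \<lfloor>(m - p) / (2 * pi)\<rfloor> + 1"
  have "(m - p) / (2 * pi) < k" "k \<le> (m - p) / (2 * pi) + 1"
    unfolding k_def by linarith+
  then have "p - 2 * pi \<le> m - 2 * pi * k" "m - 2 * pi * k < p"
    by (simp_all add: field_simps)
  then obtain c \<phi> where c: "0 \<le> c" "u + of_real c * cis \<phi> \<in> S"
    and \<phi>: "m - 2 * pi * k \<le> \<phi>" "\<phi> \<le> m - 2 * pi * k + \<alpha>"
    using assms by blast
  have "u + of_real c * cis (\<phi> + 2 * pi * k) \<in> cone u \<alpha> \<theta>"
    unfolding cone_def using c(1) \<phi> by (force simp: m_def)
  with empty c(2) show False
    by (auto simp: cis_add_2pi_multiple)
qed

lemma not_has_gap_three_directions:
  assumes "pB - pA \<le> \<alpha>" "pC - pB \<le> \<alpha>" "pA + 2 * pi - pC \<le> \<alpha>"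
    and "0 \<le> cA" "0 \<le> cB" "0 \<le> cC"
    and "u + of_real cA * cis pA \<in> S" "u + of_real cB * cis pB \<in> S" "u + of_real cC * cis pC \<in> S"
  shows "\<not> has_gap u \<alpha> S"
proof (rule not_has_gap_if_every_window_hit[where p = pC])
  fix m assume m: "pC - 2 * pi \<le> m" "m < pC"
  consider "m \<le> pA" | "pA < m" "m \<le> pB" | "pB < m" by linarith
  then show "\<exists>c \<phi>. 0 \<le> c \<and> u + of_real c * cis \<phi> \<in> S \<and> m \<le> \<phi> \<and> \<phi> \<le> m + \<alpha>"
  proof cases
    case 1
    with m assms show ?thesis by (intro exI[of _ cA] exI[of _ pA]) auto
  next
    case 2
    with assms show ?thesis by (intro exI[of _ cB] exI[of _ pB]) auto
  next
    case 3
    with m assms show ?thesis by (intro exI[of _ cC] exI[of _ pC]) auto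
  qed
qed

lemma has_gap_antimono: "has_gap u \<alpha> S' \<Longrightarrow> S \<subseteq> S' \<Longrightarrow> has_gap u \<alpha> S"
  unfolding has_gap_def by blast

lemma has_gap_empty: "has_gap u \<alpha> {}"
  by (simp add: has_gap_def)

lemma cone_rigid_motion:
  "cone (b + cis \<psi> * u) \<alpha> \<theta> = (\<lambda>z. b + cis \<psi> * z) ` cone u \<alpha> (\<theta> - \<psi>)"
proof (intro equalityI subsetI)
  fix z assume "z \<in> cone (b + cis \<psi> * u) \<alpha> \<theta>"
  then obtain t \<phi> where z: "z = b + cis \<psi> * u + of_real t * cis \<phi>" and "0 \<le> t"
    "\<theta> - \<alpha> / 2 \<le> \<phi>" "\<phi> \<le> \<theta> + \<alpha> / 2"
    unfolding cone_def by blast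
  then have "u + of_real t * cis (\<phi> - \<psi>) \<in> cone u \<alpha> (\<theta> - \<psi>)"
    unfolding cone_def by force
  moreover have "z = b + cis \<psi> * (u + of_real t * cis (\<phi> - \<psi>))"
    by (simp add: z algebra_simps cis_mult)
  ultimately show "z \<in> (\<lambda>z. b + cis \<psi> * z) ` cone u \<alpha> (\<theta> - \<psi>)"
    by blast
next
  fix z assume "z \<in> (\<lambda>z. b + cis \<psi> * z) ` cone u \<alpha> (\<theta> - \<psi>)"
  then obtain t \<phi> where z: "z = b + cis \<psi> * (u + of_real t * cis \<phi>)" and "0 \<le> t"
    "\<theta> - \<psi> - \<alpha> / 2 \<le> \<phi>" "\<phi> \<le> \<theta> - \<psi> + \<alpha> / 2"
    unfolding cone_def by blast
  moreover have "z = b + cis \<psi> * u + of_real t * cis (\<phi> + \<psi>)"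
    by (simp add: z algebra_simps cis_mult)
  ultimately show "z \<in> cone (b + cis \<psi> * u) \<alpha> \<theta>"
    unfolding cone_def by force
qed

lemma inj_rigid_motion: "inj (\<lambda>z. b + cis \<psi> * z)"
  by (rule injI) simp

lemma has_gap_rigid_motion:
  "has_gap (b + cis \<psi> * u) \<alpha> ((\<lambda>z. b + cis \<psi> * z) ` S) \<longleftrightarrow> has_gap u \<alpha> S"
proof -
  have "cone (b + cis \<psi> * u) \<alpha> \<theta> \<inter> (\<lambda>z. b + cis \<psi> * z) ` S = {} \<longleftrightarrow>
        cone u \<alpha> (\<theta> - \<psi>) \<inter> S = {}" for \<theta>
    by (simp add: cone_rigid_motion flip: image_Int[OF inj_rigid_motion])
  then show ?thesis
    unfolding has_gap_def by (metis add_diff_cancel_right')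
qed

lemma dist_mult_cis: "dist (cis \<psi> * u) (cis \<psi> * v) = dist u v"
  by (simp add: dist_norm norm_mult flip: right_diff_distrib)

lemma Sset_rigid_motion:
  "Sset ((\<lambda>z. b + cis \<psi> * z) ` V) rs i (b + cis \<psi> * u) = (\<lambda>z. b + cis \<psi> * z) ` Sset V rs i u"
  unfolding Sset_def by (auto simp: dist_mult_cis)

lemma N_alpha_rigid_motion:
  "N_alpha ((\<lambda>z. b + cis \<psi> * z) ` V) rs \<alpha> (b + cis \<psi> * u) = (\<lambda>z. b + cis \<psi> * z) ` N_alpha V rs \<alpha> u"
  unfolding N_alpha_def cbtc_index_def by (auto simp: Sset_rigid_motion has_gap_rigid_motion)

lemma levels_ok_nth_mono: "levels_ok rs R \<Longrightarrow> i \<le> j \<Longrightarrow> j < length rs \<Longrightarrow> rs ! i \<le> rs ! j"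
  by (simp add: levels_ok_def sorted_nth_mono strict_sorted_imp_sorted)

lemma levels_ok_nth_le: "levels_ok rs R \<Longrightarrow> i < length rs \<Longrightarrow> rs ! i \<le> R"
  using levels_ok_nth_mono[of rs R i "length rs - 1"] by (auto simp: levels_ok_def last_conv_nth)

lemma cbtc_index_less_length:
  assumes "levels_ok rs R"
  shows "cbtc_index V rs \<alpha> u < length rs"
proof (cases "\<exists>i < length rs. \<not> has_gap u \<alpha> (Sset V rs i u)")
  case True
  then show ?thesis
    using LeastI_ex[of "\<lambda>i. i < length rs \<and> \<not> has_gap u \<alpha> (Sset V rs i u)"]
    by (simp add: cbtc_index_def)
next
  case False
  with assms show ?thesis
    by (auto simp: cbtc_index_def levels_ok_def)
qed

lemma cbtc_index_le:
  "j < length rs \<Longrightarrow> \<not> has_gap u \<alpha> (Sset V rs j u) \<Longrightarrow> cbtc_index V rs \<alpha> u \<le> j"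
  unfolding cbtc_index_def by (auto intro: Least_le)

lemma dist_le_if_in_N_alpha: "v \<in> N_alpha V rs \<alpha> u \<Longrightarrow> dist u v \<le> rs ! cbtc_index V rs \<alpha> u"
  by (simp add: N_alpha_def Sset_def)

lemma N_alpha_dist_le:
  assumes "levels_ok rs R" "v \<in> N_alpha V rs \<alpha> u"
  shows "dist u v \<le> R"
  using dist_le_if_in_N_alpha[OF assms(2)]
    levels_ok_nth_le[OF assms(1) cbtc_index_less_length[OF assms(1)]]
  by (rule order_trans)

lemma E_alpha_dist_le: "levels_ok rs R \<Longrightarrow> (u, v) \<in> E_alpha V rs \<alpha> \<Longrightarrow> dist u v \<le> R"
  unfolding E_alpha_def by (auto dest: N_alpha_dist_le simp: dist_commute)

lemma N_alpha_subset_cball_farthest: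
  assumes "levels_ok rs R" "finite S" "S \<subseteq> V - {u}" "\<not> has_gap u \<alpha> S" "dist u ` S \<subseteq> set rs"
  shows "N_alpha V rs \<alpha> u \<subseteq> cball u (Max (dist u ` S))"
proof -
  have "S \<noteq> {}"
    using assms(4) has_gap_empty by blast
  then have "Max (dist u ` S) \<in> dist u ` S"
    using assms(2) by (intro Max_in) auto
  then have "Max (dist u ` S) \<in> set rs"
    using assms(5) by blast
  then obtain j where j: "j < length rs" "rs ! j = Max (dist u ` S)"
    by (auto simp: in_set_conv_nth)
  have "S \<subseteq> Sset V rs j u"
    using assms(2,3) j(2) by (auto simp: Sset_def)
  then have "\<not> has_gap u \<alpha> (Sset V rs j u)"
    using assms(4) has_gap_antimono by blast
  then have "cbtc_index V rs \<alpha> u \<le> j"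
    using j(1) by (rule cbtc_index_le[rotated])
  then have "rs ! cbtc_index V rs \<alpha> u \<le> Max (dist u ` S)"
    using levels_ok_nth_mono[OF assms(1) _ j(1)] j(2) by simp
  then show ?thesis
    using dist_le_if_in_N_alpha by force
qed

lemma graph_connected_if_reachable_from:
  assumes "sym E" "\<And>v. v \<in> V \<Longrightarrow> (h, v) \<in> E\<^sup>*"
  shows "graph_connected V E"
  unfolding graph_connected_def
proof (intro ballI)
  fix u v assume "u \<in> V" "v \<in> V"
  then have "(u, h) \<in> E\<^sup>*" "(h, v) \<in> E\<^sup>*"
    using assms(2) symD[OF sym_rtrancl[OF assms(1)]] by blast+
  then show "(u, v) \<in> E\<^sup>*"
    by (rule rtrancl_trans)
qed

lemma not_graph_connected_if_closed:
  assumes "u \<in> A" "A \<subseteq> V" "v \<in> V" "v \<notin> A" "\<And>x y. x \<in> A \<Longrightarrow> (x, y) \<in> E \<Longrightarrow> y \<in> A"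
  shows "\<not> graph_connected V E"
proof
  assume "graph_connected V E"
  then have "(u, v) \<in> E\<^sup>*"
    using assms(1-3) unfolding graph_connected_def by blast
  then have "v \<in> A"
    by induction (use assms in auto)
  with assms(4) show False ..
qed

lemma E_R_connected_point_symmetric:
  assumes "0 \<in> P" "\<And>x. x \<in> P \<Longrightarrow> cmod x \<le> 1"
  shows "graph_connected (P \<union> (\<lambda>z. 1 - z) ` P) (E_R (P \<union> (\<lambda>z. 1 - z) ` P) 1)"
proof (rule graph_connected_if_reachable_from[where h = 0])
  let ?V = "P \<union> (\<lambda>z. 1 - z) ` P"
  let ?E = "E_R ?V 1"
  show "sym ?E"
    by (auto simp: sym_def E_R_def dist_commute)
  have short: "(u, v) \<in> ?E\<^sup>*" if "u \<in> ?V" "v \<in> ?V" "dist u v \<le> 1" for u v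
    using that by (cases "u = v") (auto simp: E_R_def)
  have "0 \<in> ?V" "1 \<in> ?V"
    using assms(1) by force+
  fix v assume "v \<in> ?V"
  then consider "v \<in> P" | x where "x \<in> P" "v = 1 - x"
    by blast
  then show "(0, v) \<in> ?E\<^sup>*"
  proof cases
    case 1
    then show ?thesis
      using short[of 0 v] \<open>0 \<in> ?V\<close> \<open>v \<in> ?V\<close> assms(2) by simp
  next
    case 2
    then have "(0, 1) \<in> ?E\<^sup>*" "(1, v) \<in> ?E\<^sup>*"
      using short \<open>0 \<in> ?V\<close> \<open>1 \<in> ?V\<close> \<open>v \<in> ?V\<close> assms(2) by (simp_all add: dist_norm)
    then show ?thesis
      by (rule rtrancl_trans)
  qed
qed

lemma cbtc_separates_0_1_point_symmetric:
  fixes P :: "complex set"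
  defines "V \<equiv> P \<union> (\<lambda>z. 1 - z) ` P"
  assumes fin: "finite P" and zero: "0 \<in> P" and near: "\<And>x. x \<in> P \<Longrightarrow> cmod x < 1"
    and no_gap: "\<not> has_gap 0 \<alpha> (P - {0})" and levels: "levels_ok rs 1"
    and dists: "\<forall>u\<in>V. \<forall>v\<in>V. u \<noteq> v \<and> dist u v \<le> 1 \<longrightarrow> dist u v \<in> set rs"
  shows "1 \<notin> N_alpha V rs \<alpha> 0" "0 \<notin> N_alpha V rs \<alpha> 1"
proof -
  have "P - {0} \<noteq> {}"
    using no_gap has_gap_empty by metis
  then have far_level: "Max (dist 0 ` (P - {0})) < 1"
    using fin near by simp
  have "dist 0 x \<in> set rs" if "x \<in> P - {0}" for x
  proof -
    have "0 \<in> V" "x \<in> V" "dist 0 x \<le> 1"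
      using zero that near[of x] by (auto simp: V_def)
    with that show ?thesis
      using dists by auto
  qed
  then have "dist 0 ` (P - {0}) \<subseteq> set rs"
    by blast
  then have "N_alpha V rs \<alpha> 0 \<subseteq> cball 0 (Max (dist 0 ` (P - {0})))"
    using fin no_gap levels by (intro N_alpha_subset_cball_farthest) (auto simp: V_def)
  with far_level show not_1: "1 \<notin> N_alpha V rs \<alpha> 0"
    by auto
  have "(\<lambda>z. 1 + cis pi * z) ` V = V"
    by (force simp: V_def image_Un image_image)
  then have "N_alpha V rs \<alpha> 1 = (\<lambda>z. 1 - z) ` N_alpha V rs \<alpha> 0"
    using N_alpha_rigid_motion[of 1 pi V rs \<alpha> 0] by simp
  with not_1 show "0 \<notin> N_alpha V rs \<alpha> 1"
    by auto
qed

lemma E_alpha_disconnected_point_symmetric: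
  fixes P :: "complex set"
  defines "V \<equiv> P \<union> (\<lambda>z. 1 - z) ` P"
  assumes fin: "finite P" and zero: "0 \<in> P" and near: "\<And>x. x \<in> P \<Longrightarrow> cmod x < 1"
    and no_gap: "\<not> has_gap 0 \<alpha> (P - {0})"
    and far: "\<And>x y. x \<in> P \<Longrightarrow> y \<in> P \<Longrightarrow> x \<noteq> 0 \<or> y \<noteq> 0 \<Longrightarrow> 1 < cmod (1 - (x + y))"
      \<comment> \<open>as \<open>dist x (1 - y) = cmod (1 - (x + y))\<close>, only the pair 0, 1 joins the two halves
        of \<open>V\<close> within distance 1\<close>
    and levels: "levels_ok rs 1"
    and dists: "\<forall>u\<in>V. \<forall>v\<in>V. u \<noteq> v \<and> dist u v \<le> 1 \<longrightarrow> dist u v \<in> set rs"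
  shows "\<not> graph_connected V (E_alpha V rs \<alpha>)"
proof (rule not_graph_connected_if_closed[where u = 0 and v = 1 and A = P])
  show "0 \<in> P" "P \<subseteq> V"
    using zero by (auto simp: V_def)
  show "1 \<in> V"
    using zero by (force simp: V_def)
  show "1 \<notin> P"
    using far[of 0 1] zero by auto
  have no_edge_0_1: "(0, 1) \<notin> E_alpha V rs \<alpha>"
    using cbtc_separates_0_1_point_symmetric[OF fin zero near no_gap levels dists[unfolded V_def]]
    by (auto simp: E_alpha_def V_def)
  fix x y assume x: "x \<in> P" and xy: "(x, y) \<in> E_alpha V rs \<alpha>"
  show "y \<in> P"
  proof (rule ccontr)
    assume "y \<notin> P"
    moreover have "y \<in> V"
      using xy by (simp add: E_alpha_def)
    ultimately obtain z where z: "z \<in> P" "y = 1 - z"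
      by (auto simp: V_def)
    have "y - x = 1 - (x + z)"
      using z(2) by simp
    then have "dist x y = cmod (1 - (x + z))"
      by (simp only: dist_norm norm_minus_commute[of x y])
    then have "cmod (1 - (x + z)) \<le> 1"
      using E_alpha_dist_le[OF levels xy] by simp
    then have "x = 0 \<and> z = 0"
      using far[OF x z(1)] by fastforce
    with xy z(2) no_edge_0_1 show False
      by simp
  qed
qed

lemma one_less_cmod_one_minus_iff: "1 < cmod (1 - z) \<longleftrightarrow> 2 * Re z < (cmod z)\<^sup>2"
proof -
  have "(cmod (1 - z))\<^sup>2 = 1 - 2 * Re z + (cmod z)\<^sup>2"
    by (simp add: cmod_power2 power2_diff)
  moreover have "1 < cmod (1 - z) \<longleftrightarrow> 1 < (cmod (1 - z))\<^sup>2"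
    by (smt (verit) norm_ge_zero one_less_power power_le_one zero_less_numeral)
  ultimately show ?thesis
    by simp
qed

locale cbtc_counterexample =
  fixes e :: real
  assumes e_pos: "0 < e" and e_le: "e \<le> pi / 12"
begin

text \<open>
  The radius \<open>t\<close> lies strictly between \<open>2 cos a\<close> and 1, so that \<open>A1\<close> is within 1 of 0 but
  farther than 1 from 1, and also from its mirror image \<open>1 - A1\<close>. The radius \<open>r\<close> is small
  enough to keep \<open>A3\<close> farther than 1 from \<open>1 - A1\<close>.
\<close>

definition a :: real where "a = pi / 3 + e"
definition t :: real where "t = 1 / 2 + cos a"
definition r :: real where "r = t * (t - 2 * cos a) / 2"
definition A1 :: complex where "A1 = of_real t * cis a"
definition A2 :: complex where "A2 = of_real (1 / 2) * cis pi"
definition A3 :: complex where "A3 = of_real r * cis (- pi / 2 - e)"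
definition P :: "complex set" where "P = {0, A1, A2, A3}"

lemma cos_a_pos: "0 < cos a"
  unfolding a_def using e_pos e_le by (intro cos_gt_zero_pi) auto

lemma cos_a_less: "cos a < 1 / 2"
  unfolding a_def using e_pos e_le cos_monotone_0_pi[of "pi / 3" "pi / 3 + e"] by (simp add: cos_60)

lemma sin_e_pos: "0 < sin e"
  using e_pos e_le by (intro sin_gt_zero) auto

lemma t_bounds: "2 * cos a < t" "t < 1"
  using cos_a_pos cos_a_less by (auto simp: t_def)

lemma t_pos: "0 < t"
  using t_bounds cos_a_pos by linarith

lemma r_pos: "0 < r"
  using t_bounds t_pos by (simp add: r_def)

lemma r_less_1: "r < 1"
proof -
  have "t * (t - 2 * cos a) < 1 * 1"
    using t_bounds t_pos cos_a_pos by (intro mult_strict_mono) auto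
  then show ?thesis
    by (simp add: r_def)
qed

lemma Re_A1: "Re A1 = t * cos a" and Im_A1: "Im A1 = t * sin a"
  by (simp_all add: A1_def)

lemma A2_eq: "A2 = - 1 / 2"
  by (simp add: A2_def)

lemma Re_A3: "Re A3 = - r * sin e" and Im_A3: "Im A3 = - r * cos e"
  by (simp_all add: A3_def cos_diff sin_diff)

lemma cmod_A1: "cmod A1 = t" and cmod_A3: "cmod A3 = r"
  using t_pos r_pos by (simp_all add: A1_def A3_def norm_mult)

lemma P_norm_less_1: "x \<in> P \<Longrightarrow> cmod x < 1"
  using t_bounds r_less_1 by (auto simp: P_def cmod_A1 cmod_A3 A2_eq)

lemma P_no_gap:
  assumes "5 * pi / 6 + 2 * e \<le> \<alpha>"
  shows "\<not> has_gap 0 \<alpha> (P - {0})"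
proof (rule not_has_gap_three_directions[where pA = "- pi / 2 - e" and pB = a and pC = pi
      and cA = r and cB = t and cC = "1 / 2"])
  show "0 + of_real r * cis (- pi / 2 - e) \<in> P - {0}"
    using r_pos by (simp add: P_def A3_def)
  show "0 + of_real t * cis a \<in> P - {0}"
    using t_pos by (simp add: P_def A1_def)
  show "0 + of_real (1 / 2) * cis pi \<in> P - {0}"
    by (simp add: P_def A2_def)
qed (use assms e_pos e_le t_pos r_pos in \<open>auto simp: a_def\<close>)

lemma far_A1: "1 < cmod (1 - A1)"
  using t_bounds t_pos by (simp add: one_less_cmod_one_minus_iff Re_A1 cmod_A1 power2_eq_square)

lemma far_A1_A1: "1 < cmod (1 - (A1 + A1))"
proof -
  have "2 * Re (A1 + A1) < (cmod (A1 + A1))\<^sup>2"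
    using t_bounds t_pos cos_a_pos
    by (simp add: Re_A1 cmod_A1 power2_eq_square flip: mult_2)
  then show ?thesis
    by (simp add: one_less_cmod_one_minus_iff)
qed

lemma far_A1_A3: "1 < cmod (1 - (A1 + A3))"
proof -
  have "(cmod (A1 + A3))\<^sup>2 = (t * cos a - r * sin e)\<^sup>2 + (t * sin a - r * cos e)\<^sup>2"
    by (simp add: cmod_power2 Re_A1 Im_A1 Re_A3 Im_A3)
  also have "\<dots> = t\<^sup>2 * ((sin a)\<^sup>2 + (cos a)\<^sup>2) + r\<^sup>2 * ((sin e)\<^sup>2 + (cos e)\<^sup>2)
      - 2 * t * r * (sin a * cos e + cos a * sin e)"
    by algebra
  also have "\<dots> = t\<^sup>2 + r\<^sup>2 - 2 * t * r * sin (a + e)"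
    by (simp add: sin_add)
  finally have norm: "(cmod (A1 + A3))\<^sup>2 = t\<^sup>2 + r\<^sup>2 - 2 * t * r * sin (a + e)" .
  have "t * sin (a + e) < 1"
    using t_pos t_bounds mult_left_le[OF sin_le_one[of "a + e"], of t] by linarith
  then have "0 < r * (2 + r + 2 * sin e - 2 * t * sin (a + e))"
    using r_pos sin_e_pos by simp
  moreover have "t\<^sup>2 = 2 * r + 2 * t * cos a"
    by (simp add: r_def power2_eq_square field_simps)
  ultimately have "2 * Re (A1 + A3) < (cmod (A1 + A3))\<^sup>2"
    unfolding norm by (simp add: Re_A1 Re_A3 power2_eq_square algebra_simps)
  then show ?thesis
    by (simp add: one_less_cmod_one_minus_iff)
qed

lemma P_far:
  assumes "x \<in> P" "y \<in> P" "x \<noteq> 0 \<or> y \<noteq> 0"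
  shows "1 < cmod (1 - (x + y))"
proof -
  have "t * cos a < 1 * (1 / 2)"
    using t_bounds cos_a_pos cos_a_less by (intro mult_strict_mono) auto
  moreover have "0 < r * sin e"
    using r_pos sin_e_pos by simp
  ultimately have "Re (x + y) < 0 \<or> x + y \<in> {A1, A1 + A1, A1 + A3}"
    using assms by (auto simp: P_def Re_A1 Re_A3 A2_eq add.commute)
  moreover have "1 < cmod (1 - w)" if "Re w < 0" for w
    using that by (simp add: one_less_cmod_one_minus_iff) (smt (verit) zero_le_power2)
  ultimately show ?thesis
    using far_A1 far_A1_A1 far_A1_A3 by auto
qed

end

theorem theorem2:
  fixes \<alpha> :: real
  assumes "5 * pi / 6 < \<alpha>" and "\<alpha> < 2 * pi"
  shows "\<exists>R > 0. \<exists>V :: complex set. finite V \<and>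
           (\<forall>rs. levels_ok rs R \<and>
                 (\<forall>u\<in>V. \<forall>v\<in>V. u \<noteq> v \<and> dist u v \<le> R \<longrightarrow> dist u v \<in> set rs)
             \<longrightarrow> graph_connected V (E_R V R) \<and>
                 \<not> graph_connected V (E_alpha V rs \<alpha>))"
proof -
  define e where "e = min (pi / 12) ((\<alpha> - 5 * pi / 6) / 2)"
  have e: "0 < e" "e \<le> pi / 12" "5 * pi / 6 + 2 * e \<le> \<alpha>"
    using assms(1) by (auto simp: e_def min_def field_simps)
  interpret cbtc_counterexample e
    by unfold_locales (use e in auto)
  let ?V = "P \<union> (\<lambda>z. 1 - z) ` P"
  have "finite P" "0 \<in> P"
    by (simp_all add: P_def)
  have connected: "graph_connected ?V (E_R ?V 1)"
    using \<open>0 \<in> P\<close> P_norm_less_1 by (intro E_R_connected_point_symmetric) (auto simp: less_imp_le)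
  have disconnected: "\<not> graph_connected ?V (E_alpha ?V rs \<alpha>)"
    if "levels_ok rs 1" "\<forall>u\<in>?V. \<forall>v\<in>?V. u \<noteq> v \<and> dist u v \<le> 1 \<longrightarrow> dist u v \<in> set rs" for rs
    using E_alpha_disconnected_point_symmetric[OF \<open>finite P\<close> \<open>0 \<in> P\<close> P_norm_less_1
        P_no_gap[OF e(3)] P_far that] .
  show ?thesis
    by (rule exI[of _ 1], rule conjI[OF zero_less_one], rule exI[of _ ?V])
      (use \<open>finite P\<close> connected disconnected in blast)
qed

end
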